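(* Let $m\geq 3$. Let $\pi\in S(\mathbb{Z}_m)$ and $\pi_x\in S(\mathbb{Z}_2)$ for each $x\in\mathbb{Z}_m$, and define $\sigma\in S(\mathbb{Z}_m\times\mathbb{Z}_2)$ by $\sigma(x,y)=(\pi(x),\pi_x(y))$. Let $c\in S(\mathbb{Z}_m\times\mathbb{Z}_2)$ be given by $c(x,y)=(x+1,y)$ if $x\neq m-1$ and $c(x,y)=(x+1,y+1)$ if $x=m-1$. Then there is an integer $k$ such that $\sigma c^k$ has at least $4$ cycles; equivalently, $\min_k t(\sigma c^k)\leq 2m-4$, where $t(\tau)=2m-\mathrm{cyc}(\tau)$.
   Context: $S(X)$ denotes the set of bijections of a finite set $X$; $\mathrm{cyc}(\tau)$ is the number of cycles (including fixed points) of $\tau$. Under the bijection $\mathbb{Z}_{2m}\to\mathbb{Z}_m\times\mathbb{Z}_2$, $r+mt\mapsto(r,t)$ ($0\le r<m$, $t\in\{0,1\}$), $c$ corresponds to $z\mapsto z+1$, so $\{\sigma c^k\}$ corresponds to the circular class $[\sigma]$ and the claim says $t([\sigma])\leq 2m-4$. *)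

theory Defs
  imports Main
begin

definition ZmZ2 :: "nat \<Rightarrow> (nat \<times> nat) set" where
  "ZmZ2 m = {0..<m} \<times> {0..<2}"

definition cycle_of :: "('a \<Rightarrow> 'a) \<Rightarrow> 'a \<Rightarrow> 'a set" where
  "cycle_of f x = {(f ^^ n) x | n. True}"

definition cyc :: "'a set \<Rightarrow> ('a \<Rightarrow> 'a) \<Rightarrow> nat" where
  "cyc X f = card (cycle_of f ` X)"

definition sigma_of :: "(nat \<Rightarrow> nat) \<Rightarrow> (nat \<Rightarrow> nat \<Rightarrow> nat) \<Rightarrow> nat \<times> nat \<Rightarrow> nat \<times> nat" where
  "sigma_of p ps = (\<lambda>(x, y). (p x, ps x y))"

text \<open>c(x,y) = (x+1,y) if x \<noteq> m-1, and (x+1,y+1) = (0, y+1 mod 2) if x = m-1.\<close>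
definition c_map :: "nat \<Rightarrow> nat \<times> nat \<Rightarrow> nat \<times> nat" where
  "c_map m = (\<lambda>(x, y). if x = m - 1 then (0, (y + 1) mod 2) else (x + 1, y))"

end

theory Submission
  imports Defs "HOL-Combinatorics.Orbits"
begin

(* Label (x, y) by x + m y.  This identifies Z_m x Z_2 with Z_2m, turns c into the rotation
   z -> z + 1, a single cycle of even length and hence an odd permutation, and turns c^m into
   the flip (x, y) -> (x, 1 - y), which commutes with sigma.  So the parity of cyc (sigma c^k)
   alternates with k.  For each w some k makes sigma w a fixed point of sigma c^k, and this k
   is even iff the labels of w and sigma w have the same parity; then c^m (sigma w) is a second
   fixed point and c (sigma w) lies on a third cycle.  If for some w this k makes
   cyc (sigma c^k) even, there are at least four cycles.  Otherwise k has the same parity for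
   every w, so sigma c^k preserves the parity of labels, and c (sigma w) and c^2 (sigma w),
   whose labels have different parity, lie on two further cycles. *)

section \<open>Cycles of a map\<close>

lemma self_in_cycle_of: "x \<in> cycle_of f x"
  unfolding cycle_of_def by (metis (mono_tags) funpow_0 mem_Collect_eq)

lemma cycle_of_fixpoint:
  assumes "f x = x"
  shows "cycle_of f x = {x}"
proof -
  have "(f ^^ n) x = x" for n
    using assms by (induction n) auto
  then show ?thesis
    by (simp add: cycle_of_def)
qed

lemma cycle_of_invariant:
  assumes "\<And>y. y \<in> X \<Longrightarrow> f y \<in> X \<and> h (f y) = h y" "x \<in> X" "y \<in> cycle_of f x"
  shows "h y = h x"
proof -
  have "(f ^^ n) x \<in> X \<and> h ((f ^^ n) x) = h x" for n
    using assms(1,2) by (induction n) auto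
  then show ?thesis
    using assms(3) by (auto simp: cycle_of_def)
qed

lemma cyc_le_card: "finite X \<Longrightarrow> cyc X f \<le> card X"
  unfolding cyc_def by (rule card_image_le)

lemma card_le_cyc:
  assumes "finite X" "S \<subseteq> X" "inj_on (cycle_of f) S"
  shows "card S \<le> cyc X f"
proof -
  have "card S = card (cycle_of f ` S)"
    using assms(3) by (simp add: card_image)
  also have "\<dots> \<le> cyc X f"
    unfolding cyc_def using assms(1,2) by (intro card_mono) auto
  finally show ?thesis .
qed

lemma inj_on_cycle_of_Un_fixpoints:
  assumes "\<And>a. a \<in> A \<Longrightarrow> f a = a" "inj_on (cycle_of f) B"
  shows "inj_on (cycle_of f) (A \<union> B)"
proof (rule inj_onI)
  fix u v assume "u \<in> A \<union> B" "v \<in> A \<union> B" and eq: "cycle_of f u = cycle_of f v"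
  have "u = v" if "u \<in> A" "cycle_of f u = cycle_of f v" for u v
    using that assms(1) self_in_cycle_of[of v f] by (metis cycle_of_fixpoint singletonD)
  then show "u = v"
    using \<open>u \<in> A \<union> B\<close> \<open>v \<in> A \<union> B\<close> eq assms(2) by (metis UnE inj_onD)
qed

lemma cyc_id: "cyc X id = card X"
  by (simp add: cyc_def cycle_of_fixpoint card_image)

lemma cyc_perm_restrict:
  assumes "f ` X \<subseteq> X"
  shows "cyc X (perm_restrict f X) = cyc X f"
proof -
  have "(perm_restrict f X ^^ n) x = (f ^^ n) x \<and> (f ^^ n) x \<in> X" if "x \<in> X" for x n
    using that assms by (induction n) (auto simp: perm_restrict_def)
  then have "cycle_of (perm_restrict f X) x = cycle_of f x" if "x \<in> X" for x
    using that by (simp add: cycle_of_def)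
  then show ?thesis
    by (simp add: cyc_def cong: image_cong)
qed

section \<open>Cycle count and sign of a permutation\<close>

lemma cycle_of_eq_orbit:
  assumes "permutation p"
  shows "cycle_of p x = orbit p x"
  using assms by (simp add: orbit_altdef_permutation cycle_of_def)

lemma cyc_eq_card_orbits:
  assumes "permutation p"
  shows "cyc X p = card (orbit p ` X)"
  using assms by (simp add: cyc_def cycle_of_eq_orbit)

lemma orbit_eq_if_mem:
  assumes "permutation p" "y \<in> orbit p x"
  shows "orbit p y = orbit p x"
  using assms by (metis cyclic_on_orbit' orbit_cyclic_eq3)

lemma orbits_transpose_comp:
  assumes perm: "permutation p" and pa: "p a \<noteq> a"
  defines "q \<equiv> transpose a (p a) \<circ> p"
  shows "orbit q a = {a}"
    and "orbit q (p a) = orbit p a - {a}"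
    and "a \<notin> orbit p x \<Longrightarrow> orbit q x = orbit p x"
proof -
  have q_eq: "q y = (if p y = a then p a else p y)" if "y \<noteq> a" for y
    using that permutation_bijective[OF perm] unfolding q_def
    by (auto simp: transpose_def bij_def dest: injD)
  show "orbit q a = {a}"
    by (simp add: orbit_eq_singleton_iff q_def)
  show "a \<notin> orbit p x \<Longrightarrow> orbit q x = orbit p x"
  proof (rule orbit_cong)
    fix s assume "a \<notin> orbit p x" "s \<in> orbit p x"
    then have "s \<noteq> a" "p s \<noteq> a" by (auto intro: orbit.step)
    then show "q s = p s" by (simp add: q_eq)
  qed (rule permutation_self_in_orbit[OF perm])
  have pa_in: "p a \<in> orbit p a - {a}"
    using pa by (simp add: orbit.base)
  have q_in: "q y \<in> orbit p a - {a}" if "y \<in> orbit p a - {a}" for y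
    using that pa_in by (auto simp: q_eq intro: orbit.step)
  have "permutation q"
    unfolding q_def by (intro permutation_compose permutation_swap_id perm)
  then have pa_self: "p a \<in> orbit q (p a)"
    by (rule permutation_self_in_orbit)
  show "orbit q (p a) = orbit p a - {a}"
  proof
    show "orbit q (p a) \<subseteq> orbit p a - {a}"
    proof
      fix y assume "y \<in> orbit q (p a)"
      then show "y \<in> orbit p a - {a}"
        by induction (use pa_in q_in in auto)
    qed
  next
    have "y \<in> insert a (orbit q (p a))" if "y \<in> orbit p a" for y
      using that
    proof induction
      case base
      then show ?case using pa_self by simp
    next
      case (step y)
      then show ?case
        using pa_self q_eq[of y] orbit.step[of y q "p a"] by (cases "y = a") (auto split: if_splits)
    qed
    then show "orbit p a - {a} \<subseteq> orbit q (p a)" by blast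
  qed
qed

lemma cyc_transpose_comp:
  assumes pX: "p permutes X" and fin: "finite X" and pa: "p a \<noteq> a"
  shows "cyc X (transpose a (p a) \<circ> p) = Suc (cyc X p)"
proof -
  define q where "q = transpose a (p a) \<circ> p"
  define C where "C = orbit p a"
  have perm: "permutation p"
    using pX fin permutation_permutes by blast
  have perm_q: "permutation q"
    unfolding q_def by (intro permutation_compose permutation_swap_id perm)
  have self: "\<And>x. x \<in> orbit p x"
    using perm by (rule permutation_self_in_orbit)
  have "a \<in> X"
    using pa pX permutes_not_in by metis
  then have a_in: "a \<in> X \<inter> C" and pa_in: "p a \<in> X \<inter> C"
    using self pX by (auto simp: C_def permutes_in_image orbit.base)
  note split = orbits_transpose_comp[OF perm pa, folded q_def]
  have outside: "x \<notin> C \<longleftrightarrow> orbit p x \<noteq> C" "a \<notin> orbit p x \<longleftrightarrow> orbit p x \<noteq> C" for x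
    using perm self orbit_eq_if_mem unfolding C_def by metis+
  have inside: "orbit q ` (X \<inter> C) = {{a}, C - {a}}"
  proof -
    have "orbit q x = C - {a}" if "x \<in> C - {a}" for x
      using that split(2) orbit_eq_if_mem[OF perm_q] unfolding C_def by metis
    then show ?thesis
      using a_in pa_in split(1,2) pa unfolding C_def by (auto simp: image_iff)
  qed
  have "orbit q ` (X - C) = orbit p ` (X - C)"
    using split(3) outside by (intro image_cong) auto
  also have "\<dots> = orbit p ` X - {C}"
    using outside(1) by auto
  finally have "orbit q ` (X - C) = orbit p ` X - {C}" .
  moreover have "orbit q ` X = orbit q ` (X \<inter> C) \<union> orbit q ` (X - C)"
    by blast
  ultimately have "orbit q ` X = insert {a} (insert (C - {a}) (orbit p ` X - {C}))"
    using inside by simp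
  moreover have "{a} \<notin> orbit p ` X - {C}"
    using outside(2) by auto
  moreover have "C - {a} \<notin> orbit p ` X - {C}"
    using outside(1) self by blast
  moreover have "{a} \<noteq> C - {a}"
    using pa_in by auto
  moreover have "card (orbit p ` X) = Suc (card (orbit p ` X - {C}))"
    using fin a_in by (intro card.remove) (auto simp: C_def)
  ultimately have "card (orbit q ` X) = Suc (card (orbit p ` X))"
    using fin by simp
  then show ?thesis
    using perm perm_q by (simp add: cyc_eq_card_orbits q_def)
qed

lemma support_transpose_comp:
  assumes "inj p"
  shows "{x. (transpose a (p a) \<circ> p) x \<noteq> x} \<subseteq> {x. p x \<noteq> x} - {a}"
proof (intro subsetI CollectI DiffI)
  fix x assume "x \<in> {x. (transpose a (p a) \<circ> p) x \<noteq> x}"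
  then have moved: "transpose a (p a) (p x) \<noteq> x" by simp
  then show "x \<notin> {a}" by auto
  show "p x \<noteq> x"
  proof
    assume px: "p x = x"
    show False
    proof (cases "x = p a")
      case True
      with px have "p a = a"
        using assms by (metis injD)
      with moved px show False by simp
    next
      case False
      with moved px \<open>x \<notin> {a}\<close> show False by simp
    qed
  qed
qed

lemma evenperm_iff_even_card_minus_cyc:
  assumes "p permutes X" "finite X"
  shows "evenperm p \<longleftrightarrow> even (card X - cyc X p)"
  using assms
proof (induction "card {x. p x \<noteq> x}" arbitrary: p rule: less_induct)
  case less
  show ?case
  proof (cases "p = id")
    case True
    then show ?thesis by (simp add: cyc_id)
  next
    case False
    then obtain a where pa: "p a \<noteq> a" by (metis eq_id_iff)
    define q where "q = transpose a (p a) \<circ> p"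
    have perm: "permutation p"
      using less.prems by (rule permutes_imp_permutation[rotated])
    have "a \<in> X"
      using pa less.prems permutes_not_in by metis
    then have q_perm: "q permutes X"
      unfolding q_def using less.prems
      by (intro permutes_compose permutes_swap_id) (auto simp: permutes_in_image)
    have "{x. q x \<noteq> x} \<subseteq> {x. p x \<noteq> x} - {a}"
      unfolding q_def using permutes_inj[OF less.prems(1)] by (rule support_transpose_comp)
    then have "card {x. q x \<noteq> x} \<le> card ({x. p x \<noteq> x} - {a})"
      using permutation_finite_support[OF perm] by (intro card_mono) auto
    also have "\<dots> < card {x. p x \<noteq> x}"
      using permutation_finite_support[OF perm] pa by (intro card_Diff1_less) auto
    finally have "card {x. q x \<noteq> x} < card {x. p x \<noteq> x}" .
    then have "evenperm q \<longleftrightarrow> even (card X - cyc X q)"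
      using less.hyps q_perm less.prems(2) by blast
    moreover have "cyc X q = Suc (cyc X p)" "cyc X q \<le> card X"
      using cyc_transpose_comp[OF less.prems pa] cyc_le_card[OF less.prems(2), of q]
      by (simp_all add: q_def)
    moreover have "evenperm q \<longleftrightarrow> \<not> evenperm p"
      using pa by (auto simp: q_def evenperm_comp[OF permutation_swap_id perm] evenperm_swap)
    ultimately show ?thesis
      by (simp, blast)
  qed
qed

lemma perm_restrict_permutes:
  assumes "bij_betw f X X"
  shows "perm_restrict f X permutes X"
proof (rule bij_imp_permutes)
  show "bij_betw (perm_restrict f X) X X"
    using assms by (rule bij_betw_cong[THEN iffD1, rotated]) (simp add: perm_restrict_def)
qed (simp add: perm_restrict_def)

lemma even_card_minus_cyc_comp:
  assumes fin: "finite X" and f: "bij_betw f X X" and g: "bij_betw g X X"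
  shows "even (card X - cyc X (f \<circ> g)) \<longleftrightarrow>
    (even (card X - cyc X f) \<longleftrightarrow> even (card X - cyc X g))"
proof -
  have fg: "bij_betw (f \<circ> g) X X"
    using g f by (rule bij_betw_trans)
  have "perm_restrict (f \<circ> g) X = perm_restrict f X \<circ> perm_restrict g X"
    using bij_betw_apply[OF g] by (auto simp: perm_restrict_def fun_eq_iff)
  then have "evenperm (perm_restrict (f \<circ> g) X) \<longleftrightarrow>
      (evenperm (perm_restrict f X) \<longleftrightarrow> evenperm (perm_restrict g X))"
    using fin f g perm_restrict_permutes permutes_imp_permutation by (metis evenperm_comp)
  moreover have "evenperm (perm_restrict h X) \<longleftrightarrow> even (card X - cyc X h)"
    if "bij_betw h X X" for h
    using evenperm_iff_even_card_minus_cyc[OF perm_restrict_permutes[OF that] fin]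
      cyc_perm_restrict[of h X] bij_betw_imp_surj_on[OF that] by simp
  ultimately show ?thesis
    using f g fg by simp
qed

section \<open>Rotations of a labelled cycle\<close>

lemma mod_add_right_cancel_nat: "(a + k) mod n = (b + k) mod n \<longleftrightarrow> a mod n = (b::nat) mod n"
proof -
  have "(a + k) mod n = (b + k) mod n \<longleftrightarrow> a mod n = b mod n" if "a \<le> b" for a b
    using that mod_eq_dvd_iff_nat[of a b n] mod_eq_dvd_iff_nat[of "a + k" "b + k" n]
    by (simp add: eq_commute)
  then show ?thesis
    by (metis nle_le)
qed

locale labelled_rotation =
  fixes X :: "'a set" and e :: "'a \<Rightarrow> nat" and c :: "'a \<Rightarrow> 'a" and n :: nat
  assumes bij_e: "bij_betw e X {0..<n}"
    and c_in: "x \<in> X \<Longrightarrow> c x \<in> X"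
    and e_c: "x \<in> X \<Longrightarrow> e (c x) = Suc (e x) mod n"
begin

lemma e_less: "x \<in> X \<Longrightarrow> e x < n"
  using bij_betw_apply[OF bij_e] by simp

lemma e_inj: "x \<in> X \<Longrightarrow> y \<in> X \<Longrightarrow> e x = e y \<Longrightarrow> x = y"
  using bij_betw_imp_inj_on[OF bij_e] by (rule inj_onD)

lemma funpow_c_in: "x \<in> X \<Longrightarrow> (c ^^ k) x \<in> X"
  by (induction k) (simp_all add: c_in)

lemma e_funpow_c: "x \<in> X \<Longrightarrow> e ((c ^^ k) x) = (e x + k) mod n"
  by (induction k) (simp_all add: e_less e_c funpow_c_in mod_Suc_eq)

lemma funpow_c_eq_iff:
  assumes "x \<in> X" "i < n" "j < n"
  shows "(c ^^ i) x = (c ^^ j) x \<longleftrightarrow> i = j"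
proof
  assume "(c ^^ i) x = (c ^^ j) x"
  then have "(i + e x) mod n = (j + e x) mod n"
    using e_funpow_c[OF assms(1)] by (metis add.commute)
  then show "i = j"
    using assms by (simp add: mod_add_right_cancel_nat)
qed simp

lemma funpow_c_reaches:
  assumes x: "x \<in> X" and y: "y \<in> X"
  shows "\<exists>k. (c ^^ k) x = y"
proof
  let ?k = "e y + n - e x"
  have "e ((c ^^ ?k) x) = (e y + n) mod n"
    using x e_less[OF x] by (simp add: e_funpow_c)
  also have "\<dots> = e y"
    using e_less[OF y] by simp
  finally show "(c ^^ ?k) x = y"
    using x y by (intro e_inj funpow_c_in)
qed

lemma finite_X: "finite X"
  using bij_betw_finite[OF bij_e] by simp

lemma card_X: "card X = n"
  using bij_betw_same_card[OF bij_e] by simp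

lemma bij_c: "bij_betw c X X"
proof (rule bij_betw_imageI)
  show "inj_on c X"
  proof (rule inj_onI)
    fix x y assume "x \<in> X" "y \<in> X" "c x = c y"
    then have "(e x + 1) mod n = (e y + 1) mod n"
      by (metis e_c Suc_eq_plus1)
    then have "e x = e y"
      using \<open>x \<in> X\<close> \<open>y \<in> X\<close> by (simp only: mod_add_right_cancel_nat) (simp add: e_less)
    then show "x = y"
      using \<open>x \<in> X\<close> \<open>y \<in> X\<close> by (rule e_inj[rotated 2])
  qed
  show "c ` X = X"
  proof
    show "c ` X \<subseteq> X" using c_in by blast
    show "X \<subseteq> c ` X"
    proof
      fix y assume y: "y \<in> X"
      then obtain k where "(c ^^ k) (c y) = y"
        using funpow_c_reaches c_in by blast
      then have "y = c ((c ^^ k) y)"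
        by (simp add: funpow_swap1)
      then show "y \<in> c ` X"
        using y funpow_c_in by blast
    qed
  qed
qed

lemma cycle_of_c: "x \<in> X \<Longrightarrow> cycle_of c x = X"
  using funpow_c_in funpow_c_reaches by (auto simp: cycle_of_def) metis

lemma cyc_c:
  assumes "0 < n"
  shows "cyc X c = 1"
proof -
  have "X \<noteq> {}"
    using assms card_X by auto
  then have "cycle_of c ` X = {X}"
    using cycle_of_c by auto
  then show ?thesis
    by (simp add: cyc_def)
qed

lemma even_e_funpow_c:
  assumes "even n" "x \<in> X"
  shows "even (e ((c ^^ k) x)) \<longleftrightarrow> (even (e x) \<longleftrightarrow> even k)"
  using assms by (simp add: e_funpow_c dvd_mod_iff)

lemma even_cyc_comp_funpow_c:
  assumes "even n" "0 < n" and s: "bij_betw s X X"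
  shows "even (cyc X (s \<circ> c ^^ k)) \<longleftrightarrow> (even k \<longleftrightarrow> even (cyc X s))"
proof (induction k)
  case 0
  then show ?case by simp
next
  case (Suc k)
  have bij_sk: "bij_betw (s \<circ> c ^^ k) X X"
    using bij_betw_funpow[OF bij_c] s by (rule bij_betw_trans)
  have even_n_minus: "even (n - cyc X f) \<longleftrightarrow> even (cyc X f)" for f
    using cyc_le_card[OF finite_X, of f] card_X assms(1) by (simp add: even_diff_nat)
  from even_card_minus_cyc_comp[OF finite_X bij_sk bij_c]
  have "even (cyc X (s \<circ> c ^^ k \<circ> c)) \<longleftrightarrow> \<not> even (cyc X (s \<circ> c ^^ k))"
    unfolding card_X cyc_c[OF assms(2)] even_n_minus using assms by simp
  moreover have "s \<circ> c ^^ Suc k = s \<circ> c ^^ k \<circ> c"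
    by (simp only: funpow_Suc_right o_assoc)
  ultimately show ?case
    using Suc.IH by (simp only:) auto
qed

end

locale flip_commuting_rotation = labelled_rotation X e c "2 * m"
  for X :: "'a set" and e c and m :: nat +
  fixes s :: "'a \<Rightarrow> 'a"
  assumes three_le_m: "3 \<le> m"
    and bij_s: "bij_betw s X X"
    and s_flip: "x \<in> X \<Longrightarrow> s ((c ^^ m) x) = (c ^^ m) (s x)"
begin

lemma s_in: "x \<in> X \<Longrightarrow> s x \<in> X"
  using bij_betw_apply[OF bij_s] by blast

lemma exists_return_power:
  assumes "x \<in> X"
  shows "\<exists>k. (c ^^ k) (s x) = x \<and> (even k \<longleftrightarrow> (even (e x) \<longleftrightarrow> even (e (s x))))"
proof -
  obtain k where k: "(c ^^ k) (s x) = x"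
    using funpow_c_reaches[OF s_in assms] assms by blast
  then have "even k \<longleftrightarrow> (even (e x) \<longleftrightarrow> even (e (s x)))"
    using even_e_funpow_c[OF _ s_in[OF assms], of k] by auto
  with k show ?thesis by blast
qed

lemma fixpoints:
  assumes "x \<in> X" "(c ^^ k) (s x) = x"
  shows "(s \<circ> c ^^ k) (s x) = s x" and "(s \<circ> c ^^ k) ((c ^^ m) (s x)) = (c ^^ m) (s x)"
proof -
  show "(s \<circ> c ^^ k) (s x) = s x"
    using assms(2) by simp
  have "(c ^^ k) ((c ^^ m) (s x)) = (c ^^ m) x"
    using assms(2) by (metis add.commute comp_apply funpow_add)
  then show "(s \<circ> c ^^ k) ((c ^^ m) (s x)) = (c ^^ m) (s x)"
    using s_flip[OF assms(1)] by simp
qed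

lemma card_funpow_c_image:
  assumes "z \<in> X" "I \<subseteq> {0, 1, 2, m}"
  shows "card ((\<lambda>i. (c ^^ i) z) ` I) = card I"
proof (rule card_image, rule inj_on_subset)
  show "inj_on (\<lambda>i. (c ^^ i) z) {..<2 * m}"
    using funpow_c_eq_iff[OF assms(1)] by (auto simp: inj_on_def)
  show "I \<subseteq> {..<2 * m}"
    using assms(2) three_le_m by auto
qed

lemma three_le_cyc:
  assumes x: "x \<in> X" and k: "(c ^^ k) (s x) = x"
  shows "3 \<le> cyc X (s \<circ> c ^^ k)"
proof -
  let ?z = "s x"
  have z: "?z \<in> X"
    using x by (rule s_in)
  let ?S = "{?z, (c ^^ m) ?z} \<union> {(c ^^ 1) ?z}"
  have "inj_on (cycle_of (s \<circ> c ^^ k)) ?S"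
    using fixpoints[OF x k] by (intro inj_on_cycle_of_Un_fixpoints) auto
  then have "card ?S \<le> cyc X (s \<circ> c ^^ k)"
    using z funpow_c_in c_in finite_X by (intro card_le_cyc) auto
  moreover have "card ?S = 3"
    using card_funpow_c_image[OF z, of "{0, m, 1}"] three_le_m by (simp add: insert_commute)
  ultimately show ?thesis by simp
qed

lemma four_le_cyc:
  assumes x: "x \<in> X" and k: "(c ^^ k) (s x) = x"
    and parity: "\<And>y. y \<in> X \<Longrightarrow> even (e ((s \<circ> c ^^ k) y)) \<longleftrightarrow> even (e y)"
  shows "4 \<le> cyc X (s \<circ> c ^^ k)"
proof -
  let ?g = "s \<circ> c ^^ k" and ?z = "s x"
  have z: "?z \<in> X"
    using x by (rule s_in)
  have g_in: "?g y \<in> X" if "y \<in> X" for y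
    using that funpow_c_in s_in by simp
  have "cycle_of ?g ((c ^^ 1) ?z) \<noteq> cycle_of ?g ((c ^^ 2) ?z)"
  proof
    assume "cycle_of ?g ((c ^^ 1) ?z) = cycle_of ?g ((c ^^ 2) ?z)"
    then have "(c ^^ 2) ?z \<in> cycle_of ?g ((c ^^ 1) ?z)"
      by (simp add: self_in_cycle_of)
    then have "even (e ((c ^^ 2) ?z)) \<longleftrightarrow> even (e ((c ^^ 1) ?z))"
      using g_in parity c_in[OF z] by (intro cycle_of_invariant[of X]) auto
    then show False
      using even_e_funpow_c[OF _ z, of 1] even_e_funpow_c[OF _ z, of 2] by simp
  qed
  then have inj_pair: "inj_on (cycle_of ?g) {(c ^^ 1) ?z, (c ^^ 2) ?z}"
    by (simp add: inj_on_def)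
  let ?S = "{?z, (c ^^ m) ?z} \<union> {(c ^^ 1) ?z, (c ^^ 2) ?z}"
  have "inj_on (cycle_of ?g) ?S"
    using fixpoints[OF x k] by (intro inj_on_cycle_of_Un_fixpoints[OF _ inj_pair]) auto
  then have "card ?S \<le> cyc X ?g"
    using z funpow_c_in c_in finite_X by (intro card_le_cyc) auto
  moreover have "card ?S = 4"
    using card_funpow_c_image[OF z, of "{0, m, 1, 2}"] three_le_m by (simp add: insert_commute)
  ultimately show ?thesis by simp
qed

theorem exists_four_le_cyc_comp_funpow: "\<exists>k. 4 \<le> cyc X (s \<circ> c ^^ k)"
proof (cases "\<exists>x\<in>X. (even (e x) \<longleftrightarrow> even (e (s x))) \<longleftrightarrow> even (cyc X s)")
  case True
  then obtain x k where x: "x \<in> X" and k: "(c ^^ k) (s x) = x"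
    and "even k \<longleftrightarrow> even (cyc X s)"
    using exists_return_power by blast
  then have "even (cyc X (s \<circ> c ^^ k))"
    using even_cyc_comp_funpow_c[OF _ _ bij_s] three_le_m by simp
  moreover have "3 \<le> cyc X (s \<circ> c ^^ k)"
    using x k by (rule three_le_cyc)
  ultimately have "4 \<le> cyc X (s \<circ> c ^^ k)"
    by (cases "cyc X (s \<circ> c ^^ k) = 3") auto
  then show ?thesis ..
next
  case False
  have "X \<noteq> {}"
    using card_X three_le_m by auto
  then obtain x where x: "x \<in> X" by blast
  then obtain k where k: "(c ^^ k) (s x) = x"
    and even_k: "even k \<longleftrightarrow> (even (e x) \<longleftrightarrow> even (e (s x)))"
    using exists_return_power by blast
  have "even (e ((s \<circ> c ^^ k) y)) \<longleftrightarrow> even (e y)" if y: "y \<in> X" for y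
  proof -
    have "(c ^^ k) y \<in> X"
      using y by (rule funpow_c_in)
    then have "(even (e ((c ^^ k) y)) \<longleftrightarrow> even (e (s ((c ^^ k) y)))) \<longleftrightarrow> even k"
      using False x even_k by blast
    then show ?thesis
      using even_e_funpow_c[OF _ y, of k] by auto
  qed
  then show ?thesis
    using four_le_cyc[OF x k] by blast
qed

end

section \<open>The circular class in Z_m x Z_2\<close>

definition zm2_index :: "nat \<Rightarrow> nat \<times> nat \<Rightarrow> nat" where
  "zm2_index m = (\<lambda>(x, y). x + m * y)"

lemma mem_ZmZ2: "(x, y) \<in> ZmZ2 m \<longleftrightarrow> x < m \<and> y < 2"
  by (simp add: ZmZ2_def)

lemma bij_betw_zm2_index: "bij_betw (zm2_index m) (ZmZ2 m) {0..<2 * m}"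
proof (rule bij_betw_imageI)
  show "inj_on (zm2_index m) (ZmZ2 m)"
  proof (rule inj_onI, clarify)
    fix x y x' y' assume "(x, y) \<in> ZmZ2 m" "(x', y') \<in> ZmZ2 m"
      and eq: "zm2_index m (x, y) = zm2_index m (x', y')"
    then have "x < m" "x' < m"
      by (simp_all add: mem_ZmZ2)
    then have "(x + m * y) mod m = x" "(x' + m * y') mod m = x'"
      "(x + m * y) div m = y" "(x' + m * y') div m = y'"
      by simp_all
    then show "x = x' \<and> y = y'"
      using eq by (metis zm2_index_def case_prod_conv)
  qed
  show "zm2_index m ` ZmZ2 m = {0..<2 * m}"
  proof
    show "zm2_index m ` ZmZ2 m \<subseteq> {0..<2 * m}"
      by (auto simp: ZmZ2_def zm2_index_def less_2_cases_iff)
    show "{0..<2 * m} \<subseteq> zm2_index m ` ZmZ2 m"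
    proof
      fix k assume "k \<in> {0..<2 * m}"
      then have "(k mod m, k div m) \<in> ZmZ2 m"
        by (auto simp: mem_ZmZ2 less_mult_imp_div_less)
      moreover have "k = zm2_index m (k mod m, k div m)"
        by (simp add: zm2_index_def)
      ultimately show "k \<in> zm2_index m ` ZmZ2 m" by (rule rev_image_eqI)
    qed
  qed
qed

lemma labelled_rotation_c_map:
  assumes "0 < m"
  shows "labelled_rotation (ZmZ2 m) (zm2_index m) (c_map m) (2 * m)"
proof
  fix z assume z: "z \<in> ZmZ2 m"
  then obtain x y where xy: "z = (x, y)" "x < m" "y < 2"
    by (auto simp: ZmZ2_def)
  show "c_map m z \<in> ZmZ2 m"
    using xy by (auto simp: c_map_def mem_ZmZ2)
  show "zm2_index m (c_map m z) = Suc (zm2_index m z) mod (2 * m)"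
  proof (cases "x = m - 1")
    case True
    then show ?thesis
      using xy assms by (auto simp: c_map_def zm2_index_def less_2_cases_iff simp flip: mult_2)
  next
    case False
    then have "Suc (x + m * y) < 2 * m"
      using xy by (auto simp: less_2_cases_iff)
    then show ?thesis
      using xy False by (simp add: c_map_def zm2_index_def)
  qed
qed (rule bij_betw_zm2_index)

lemma c_map_funpow_m:
  assumes "0 < m" "(x, y) \<in> ZmZ2 m"
  shows "(c_map m ^^ m) (x, y) = (x, 1 - y)"
proof -
  interpret labelled_rotation "ZmZ2 m" "zm2_index m" "c_map m" "2 * m"
    using assms(1) by (rule labelled_rotation_c_map)
  have flip_in: "(x, 1 - y) \<in> ZmZ2 m"
    using assms(2) by (simp add: mem_ZmZ2)
  have "zm2_index m ((c_map m ^^ m) (x, y)) = (zm2_index m (x, y) + m) mod (2 * m)"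
    using assms(2) by (rule e_funpow_c)
  also have "\<dots> = zm2_index m (x, 1 - y)"
    using assms(2) by (auto simp: zm2_index_def mem_ZmZ2 less_2_cases_iff mult_2 add.assoc)
  finally have "zm2_index m ((c_map m ^^ m) (x, y)) = zm2_index m (x, 1 - y)" .
  then show ?thesis
    using assms(2) flip_in funpow_c_in by (blast intro: e_inj)
qed

lemma bij_betw_sigma_of:
  assumes p: "bij_betw p {0..<m} {0..<m}"
    and ps: "\<And>x. x < m \<Longrightarrow> bij_betw (ps x) {0..<2} {0..<2}"
  shows "bij_betw (sigma_of p ps) (ZmZ2 m) (ZmZ2 m)"
proof -
  have "inj_on (sigma_of p ps) (ZmZ2 m)"
  proof (rule inj_onI, clarify)
    fix x y x' y' assume xy: "(x, y) \<in> ZmZ2 m" "(x', y') \<in> ZmZ2 m"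
      and eq: "sigma_of p ps (x, y) = sigma_of p ps (x', y')"
    then have "x = x'"
      using bij_betw_imp_inj_on[OF p] by (auto simp: sigma_of_def mem_ZmZ2 dest: inj_onD)
    moreover have "y = y'"
    proof -
      have "ps x y = ps x y'" "x < m" "y \<in> {0..<2}" "y' \<in> {0..<2}"
        using xy eq \<open>x = x'\<close> by (auto simp: sigma_of_def mem_ZmZ2)
      then show ?thesis
        using bij_betw_imp_inj_on[OF ps] by (blast dest: inj_onD)
    qed
    ultimately show "x = x' \<and> y = y'" ..
  qed
  moreover have "sigma_of p ps ` ZmZ2 m \<subseteq> ZmZ2 m"
    using bij_betw_apply[OF p] bij_betw_apply[OF ps] by (auto simp: sigma_of_def ZmZ2_def)
  ultimately show ?thesis
    by (simp add: bij_betw_def endo_inj_surj ZmZ2_def)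
qed

lemma bij_betw_two_flip:
  fixes h :: "nat \<Rightarrow> nat"
  assumes "bij_betw h {0..<2} {0..<2}" "y < 2"
  shows "h (1 - y) = 1 - h y"
proof -
  have "h 0 < 2" "h 1 < 2" "h 0 \<noteq> h 1"
    using bij_betw_apply[OF assms(1)] bij_betw_imp_inj_on[OF assms(1)]
    by (auto dest: inj_onD)
  then show ?thesis
    using assms(2) by (auto simp: less_2_cases_iff)
qed

lemma sigma_of_c_map_funpow_m:
  assumes m: "0 < m" and p: "bij_betw p {0..<m} {0..<m}"
    and ps: "\<And>x. x < m \<Longrightarrow> bij_betw (ps x) {0..<2} {0..<2}"
    and z: "z \<in> ZmZ2 m"
  shows "sigma_of p ps ((c_map m ^^ m) z) = (c_map m ^^ m) (sigma_of p ps z)"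
proof -
  obtain x y where xy: "z = (x, y)" "x < m" "y < 2"
    using z by (cases z) (auto simp: mem_ZmZ2)
  have "sigma_of p ps z \<in> ZmZ2 m"
    using bij_betw_apply[OF bij_betw_sigma_of[OF p ps] z] .
  then show ?thesis
    using xy bij_betw_two_flip[OF ps] by (simp add: c_map_funpow_m[OF m] sigma_of_def mem_ZmZ2)
qed

theorem propositionB3:
  fixes m :: nat and p :: "nat \<Rightarrow> nat" and ps :: "nat \<Rightarrow> nat \<Rightarrow> nat"
  assumes "m \<ge> 3"
    and "bij_betw p {0..<m} {0..<m}"
    and "\<And>x. x < m \<Longrightarrow> bij_betw (ps x) {0..<2} {0..<2}"
  shows "\<exists>k::nat. cyc (ZmZ2 m) (sigma_of p ps \<circ> (c_map m ^^ k)) \<ge> 4"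
proof -
  have m: "0 < m"
    using assms(1) by simp
  interpret flip_commuting_rotation "ZmZ2 m" "zm2_index m" "c_map m" m "sigma_of p ps"
  proof (rule flip_commuting_rotation.intro)
    show "labelled_rotation (ZmZ2 m) (zm2_index m) (c_map m) (2 * m)"
      using m by (rule labelled_rotation_c_map)
    show "flip_commuting_rotation_axioms (ZmZ2 m) (c_map m) m (sigma_of p ps)"
      using assms sigma_of_c_map_funpow_m[OF m assms(2,3)] bij_betw_sigma_of[OF assms(2,3)]
      by unfold_locales auto
  qed
  show ?thesis
    using exists_four_le_cyc_comp_funpow by simp
qed

end
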